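(* Let $P$ be a partially ordered set, $\mathcal J=(p_0\le\dots\le p_n)$ a d-flag in $P$ and $0\le k\le n$. The horn inclusion $i_k:\Lambda^{\mathcal J}_k\hookrightarrow\Delta^{\mathcal J}$ is admissible (i.e. $p_k=p_{k-1}$ or $p_k=p_{k+1}$) if and only if its realization $|i_k|_P:|\Lambda^{\mathcal J}_k|_P\to|\Delta^{\mathcal J}|_P$ is a stratum preserving homotopy equivalence.
   Context: $P$ carries the Alexandroff topology (closed sets = down-sets). A d-flag is a finite sequence $\mathcal J=(p_0\le\dots\le p_n)$ in $P$ with repetitions allowed. $\Delta^{\mathcal J}$ is the simplicial set $\Delta^n$ with the filtration $i\mapsto p_i$ of its vertices, and $\Lambda^{\mathcal J}_k\subset\Delta^{\mathcal J}$ is the horn $\Lambda^n_k$ with the induced filtration. For a $P$-filtered simplicial set $X$, $|X|_P$ is the geometric realization $|X|$ together with the continuous map to $P$ sending the open cell of a nondegenerate simplex to the maximal filtration value of its vertices (for $|\Delta^{\mathcal J}|$: a point with barycentric coordinates $(t_i)$ goes to $\max\{p_i:t_i>0\}$). A stratum preserving map commutes with the maps to $P$; a stratum preserving homotopy is a homotopy $Z\times[0,1]\to W$ that is stratum preserving when the source is filtered via $Z$; a stratum preserving homotopy equivalence is a stratum preserving map with a stratum preserving homotopy inverse up to such homotopies. *)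

theory Defs
  imports "HOL-Analysis.Analysis" "HOL-Homology.Simplices"
begin

definition dflag :: "nat \<Rightarrow> (nat \<Rightarrow> 'p::order) \<Rightarrow> bool" where
  "dflag n p \<longleftrightarrow> (\<forall>i j. i \<le> j \<longrightarrow> j \<le> n \<longrightarrow> p i \<le> p j)"

definition simplex_top :: "nat \<Rightarrow> (nat \<Rightarrow> real) topology" where
  "simplex_top n = subtopology (powertop_real UNIV) (standard_simplex n)"

definition horn_set :: "nat \<Rightarrow> nat \<Rightarrow> (nat \<Rightarrow> real) set" where
  "horn_set n k = {x \<in> standard_simplex n. \<exists>j\<le>n. j \<noteq> k \<and> x j = 0}"

definition horn_top :: "nat \<Rightarrow> nat \<Rightarrow> (nat \<Rightarrow> real) topology" where
  "horn_top n k = subtopology (powertop_real UNIV) (horn_set n k)"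

definition strat :: "nat \<Rightarrow> (nat \<Rightarrow> 'p::order) \<Rightarrow> (nat \<Rightarrow> real) \<Rightarrow> 'p" where
  "strat n p t = Greatest (\<lambda>q. \<exists>i\<le>n. 0 < t i \<and> q = p i)"

definition sp_map :: "'a topology \<Rightarrow> 'b topology \<Rightarrow> ('a \<Rightarrow> 'p) \<Rightarrow> ('b \<Rightarrow> 'p) \<Rightarrow> ('a \<Rightarrow> 'b) \<Rightarrow> bool" where
  "sp_map X Y sX sY f \<longleftrightarrow> continuous_map X Y f \<and> (\<forall>x\<in>topspace X. sY (f x) = sX x)"

definition sp_homotopic :: "'a topology \<Rightarrow> 'b topology \<Rightarrow> ('a \<Rightarrow> 'p) \<Rightarrow> ('b \<Rightarrow> 'p) \<Rightarrow> ('a \<Rightarrow> 'b) \<Rightarrow> ('a \<Rightarrow> 'b) \<Rightarrow> bool" where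
  "sp_homotopic X Y sX sY f g \<longleftrightarrow>
     homotopic_with (\<lambda>h. \<forall>x\<in>topspace X. sY (h x) = sX x) X Y f g"

definition sp_homotopy_equivalence ::
  "'a topology \<Rightarrow> 'b topology \<Rightarrow> ('a \<Rightarrow> 'p) \<Rightarrow> ('b \<Rightarrow> 'p) \<Rightarrow> ('a \<Rightarrow> 'b) \<Rightarrow> bool" where
  "sp_homotopy_equivalence X Y sX sY f \<longleftrightarrow>
     sp_map X Y sX sY f \<and>
     (\<exists>g. sp_map Y X sY sX g \<and> sp_homotopic X X sX sX (g \<circ> f) id \<and>
          sp_homotopic Y Y sY sY (f \<circ> g) id)"

definition admissible_horn :: "nat \<Rightarrow> (nat \<Rightarrow> 'p) \<Rightarrow> nat \<Rightarrow> bool" where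
  "admissible_horn n p k \<longleftrightarrow> (0 < k \<and> p k = p (k - 1)) \<or> (k < n \<and> p k = p (k + 1))"

end

theory Submission
  imports Defs "HOL-Homology.Homology"
begin

text \<open>If p k = p a for a neighbouring vertex a, sliding the barycentric weight of a onto k
  deforms the simplex into the horn without changing the largest label of a positive
  coordinate, so the realized horn inclusion is a stratum preserving homotopy equivalence.

  Conversely, suppose p k differs from all other labels and g is a stratum preserving
  homotopy inverse. For n \<ge> 2 let Y be the part of the horn off the stratum p k. The
  boundary of the face opposite k is an (n-2)-sphere inside Y and a retract of Y (project
  from the vertex k). The points of the simplex off the stratum p k form a star-shaped set,
  and g maps it into Y; together with the homotopy from g to the identity this makes the
  sphere null-homotopic in Y, hence contractible, which is impossible. For n \<le> 1 the horn
  is empty or a single vertex in the stratum p k, and g cannot preserve strata.\<close>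

lemma continuous_map_Max_real:
  assumes "finite I" "I \<noteq> {}" "\<And>i. i \<in> I \<Longrightarrow> continuous_map X euclideanreal (f i)"
  shows "continuous_map X euclideanreal (\<lambda>x. Max ((\<lambda>i. f i x) ` I))"
  using assms
proof (induction I rule: finite_ne_induct)
  case (insert i F)
  then have "(\<lambda>x. Max ((\<lambda>i. f i x) ` insert i F)) = (\<lambda>x. max (f i x) (Max ((\<lambda>i. f i x) ` F)))"
    by (auto simp: Max_insert)
  with insert show ?case
    by (auto intro!: continuous_map_real_max)
qed simp

lemma homotopic_with_into_subtopology:
  assumes "homotopic_with P X Y f g"
    and "\<And>h. P h \<Longrightarrow> h ` topspace X \<subseteq> topspace Y \<Longrightarrow> h ` topspace X \<subseteq> S"
  shows "homotopic_with (\<lambda>_. True) X (subtopology Y S) f g"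
proof -
  obtain h where h: "continuous_map (prod_topology (top_of_set {0..1::real}) X) Y h"
    "\<forall>x. h (0, x) = f x" "\<forall>x. h (1, x) = g x" "\<forall>t\<in>{0..1}. P (\<lambda>x. h (t, x))"
    using assms(1) unfolding homotopic_with_def by blast
  have "h (t, x) \<in> S" if "t \<in> {0..1}" "x \<in> topspace X" for t x
  proof -
    have "(\<lambda>x. h (t, x)) ` topspace X \<subseteq> topspace Y"
      using continuous_map_image_subset_topspace[OF h(1)] that(1) by auto
    with assms(2) h(4) that show ?thesis by blast
  qed
  with h show ?thesis
    unfolding homotopic_with_def by (intro exI[of _ h]) (auto simp: continuous_map_in_subtopology)
qed

lemma contractible_space_if_nullhomotopic_section:
  assumes s: "continuous_map X Y s" and r: "continuous_map Y X r"
    and rs: "\<And>x. x \<in> topspace X \<Longrightarrow> r (s x) = x"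
    and null: "homotopic_with (\<lambda>_. True) X Y s (\<lambda>_. c)"
  shows "contractible_space X"
proof -
  have "homotopic_with (\<lambda>_. True) X X id (r \<circ> s)"
    using s r rs by (intro homotopic_with_equal) (auto intro: continuous_map_compose)
  moreover have "homotopic_with (\<lambda>_. True) X X (r \<circ> s) (r \<circ> (\<lambda>_. c))"
    using null r by (rule homotopic_with_compose_continuous_map_left) auto
  ultimately have "homotopic_with (\<lambda>_. True) X X id (\<lambda>_. r c)"
    by (auto intro: homotopic_with_trans)
  then show ?thesis
    unfolding contractible_space_def by blast
qed

section \<open>Barycentric coordinates and strata\<close>

lemma standard_simplex_iff:
  "x \<in> standard_simplex n \<longleftrightarrow> (\<forall>i. 0 \<le> x i) \<and> (\<forall>i>n. x i = 0) \<and> (\<Sum>i\<le>n. x i) = 1"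
proof
  assume x: "(\<forall>i. 0 \<le> x i) \<and> (\<forall>i>n. x i = 0) \<and> (\<Sum>i\<le>n. x i) = 1"
  have "x i \<le> 1" for i
  proof (cases "i \<le> n")
    case True
    then have "x i \<le> (\<Sum>j\<le>n. x j)"
      using x by (intro member_le_sum) auto
    with x show ?thesis by simp
  qed (use x in auto)
  with x show "x \<in> standard_simplex n"
    by (simp add: standard_simplex_def)
qed (simp add: standard_simplex_def)

lemma standard_simplex_ex_pos: "t \<in> standard_simplex n \<Longrightarrow> \<exists>i\<le>n. 0 < t i"
  unfolding standard_simplex_iff
  by (metis atMost_iff order_less_le sum.neutral zero_neq_one)

lemma standard_simplex_vertex_coord:
  assumes "t \<in> standard_simplex n" "k \<le> n" "t k = 1" "j \<noteq> k"
  shows "t j = 0"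
proof (cases "j \<le> n")
  case True
  have "(\<Sum>i\<le>n. t i) = t k + (\<Sum>i\<in>{..n}-{k}. t i)"
    using assms(2) by (simp add: sum.remove)
  then have "(\<Sum>i\<in>{..n}-{k}. t i) = 0"
    using assms(1,3) by (simp add: standard_simplex_def)
  then show ?thesis
    using assms(1,4) True sum_nonneg_eq_0_iff[of "{..n}-{k}" t]
    by (auto simp: standard_simplex_def)
qed (use assms in \<open>auto simp: standard_simplex_def\<close>)

definition simplex_vertex :: "nat \<Rightarrow> nat \<Rightarrow> real" where
  "simplex_vertex z = (\<lambda>i. if i = z then 1 else 0)"

lemma simplex_vertex_in_standard_simplex: "z \<le> n \<Longrightarrow> simplex_vertex z \<in> standard_simplex n"
  by (simp add: simplex_vertex_def)

lemma topspace_simplex_top [simp]: "topspace (simplex_top n) = standard_simplex n"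
  by (simp add: simplex_top_def)

lemma topspace_horn_top [simp]: "topspace (horn_top n k) = horn_set n k"
  by (simp add: horn_top_def)

lemma horn_set_subset_standard_simplex: "horn_set n k \<subseteq> standard_simplex n"
  by (auto simp: horn_set_def)

lemma horn_set_one_vertex:
  assumes "k \<le> 1" "t \<in> horn_set 1 k"
  shows "t k = 1"
proof -
  obtain j where j: "j \<le> 1" "j \<noteq> k" "t j = 0" and t: "t \<in> standard_simplex 1"
    using assms(2) by (auto simp: horn_set_def)
  have "t 0 + t 1 = 1"
    using t by (simp add: standard_simplex_def)
  moreover have "k = 1 - j"
    using j(1,2) assms(1) by arith
  ultimately show ?thesis
    using j(1,3) by (cases j) auto
qed

definition lerp :: "real \<Rightarrow> (nat \<Rightarrow> real) \<Rightarrow> (nat \<Rightarrow> real) \<Rightarrow> nat \<Rightarrow> real" where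
  "lerp s x y = (\<lambda>i. (1 - s) * x i + s * y i)"

lemma lerp_0 [simp]: "lerp 0 x y = x" and lerp_1 [simp]: "lerp 1 x y = y"
  by (simp_all add: lerp_def)

lemma lerp_in_standard_simplex:
  "x \<in> standard_simplex n \<Longrightarrow> y \<in> standard_simplex n \<Longrightarrow> s \<in> {0..1} \<Longrightarrow>
   lerp s x y \<in> standard_simplex n"
  unfolding lerp_def by (auto intro: convex_standard_simplex)

lemma homotopic_with_lerp:
  assumes f: "continuous_map X (powertop_real UNIV) f" and g: "continuous_map X (powertop_real UNIV) g"
    and S: "\<And>s x. s \<in> {0..1} \<Longrightarrow> x \<in> topspace X \<Longrightarrow> lerp s (f x) (g x) \<in> S"
    and P: "\<And>s. s \<in> {0..1} \<Longrightarrow> P (\<lambda>x. lerp s (f x) (g x))"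
  shows "homotopic_with P X (subtopology (powertop_real UNIV) S) f g"
  unfolding homotopic_with_def
proof (intro exI conjI)
  let ?h = "\<lambda>w. lerp (fst w) (f (snd w)) (g (snd w))"
  let ?I = "top_of_set {0..1::real}"
  have "continuous_map (prod_topology ?I X) euclideanreal (\<lambda>w. ?h w i)" for i
  proof -
    have "continuous_map (prod_topology ?I X) euclideanreal fst"
      using continuous_map_compose[OF continuous_map_fst continuous_map_from_subtopology[OF continuous_map_id]]
      by (simp add: o_def)
    moreover have "continuous_map (prod_topology ?I X) euclideanreal (\<lambda>w. f (snd w) i)"
      using continuous_map_compose[OF continuous_map_snd[of ?I] f]
      by (simp add: o_def continuous_map_componentwise_UNIV)
    moreover have "continuous_map (prod_topology ?I X) euclideanreal (\<lambda>w. g (snd w) i)"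
      using continuous_map_compose[OF continuous_map_snd[of ?I] g]
      by (simp add: o_def continuous_map_componentwise_UNIV)
    ultimately show ?thesis
      unfolding lerp_def by (intro continuous_map_add continuous_map_real_mult continuous_map_diff) auto
  qed
  then show "continuous_map (prod_topology ?I X) (subtopology (powertop_real UNIV) S) ?h"
    using S by (auto simp: continuous_map_in_subtopology continuous_map_componentwise_UNIV)
qed (use P in auto)

lemma strat_cong_values:
  assumes "\<And>q. (\<exists>i\<le>n. 0 < t i \<and> q = p i) \<longleftrightarrow> (\<exists>i\<le>n. 0 < t' i \<and> q = p i)"
  shows "strat n p t = strat n p t'"
  unfolding strat_def using assms by presburger

lemma strat_eq_Max:
  assumes "dflag n p" "\<exists>i\<le>n. 0 < t i"
  shows "strat n p t = p (Max {i. i \<le> n \<and> 0 < t i})"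
  unfolding strat_def
proof (rule Greatest_equality)
  let ?S = "{i. i \<le> n \<and> 0 < t i}"
  have "Max ?S \<in> ?S"
    using assms(2) by (intro Max_in) auto
  then show "\<exists>i\<le>n. 0 < t i \<and> p (Max ?S) = p i" by blast
  fix q assume "\<exists>i\<le>n. 0 < t i \<and> q = p i"
  then obtain i where "i \<le> n" "0 < t i" "q = p i" by blast
  moreover have "i \<le> Max ?S" "Max ?S \<le> n"
    using \<open>Max ?S \<in> ?S\<close> \<open>i \<le> n\<close> \<open>0 < t i\<close> by (auto intro: Max_ge)
  ultimately show "q \<le> p (Max ?S)"
    using assms(1) by (simp add: dflag_def)
qed

lemma strat_simplex_vertex: "z \<le> n \<Longrightarrow> strat n p (simplex_vertex z) = p z"
  unfolding strat_def simplex_vertex_def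
  by (rule Greatest_equality) (auto split: if_splits)

section \<open>Admissible horns\<close>

definition collapse_vertex :: "nat \<Rightarrow> nat \<Rightarrow> (nat \<Rightarrow> real) \<Rightarrow> nat \<Rightarrow> real" where
  "collapse_vertex a k t = (\<lambda>i. if i = a then 0 else if i = k then t k + t a else t i)"

lemma continuous_map_collapse_vertex:
  "continuous_map (subtopology (powertop_real UNIV) S) (powertop_real UNIV) (collapse_vertex a k)"
  unfolding continuous_map_componentwise_UNIV collapse_vertex_def
  by (auto intro!: continuous_intros continuous_map_from_subtopology continuous_map_product_projection)

lemma collapse_vertex_in_standard_simplex:
  assumes "a \<noteq> k" "a \<le> n" "k \<le> n" "t \<in> standard_simplex n"
  shows "collapse_vertex a k t \<in> standard_simplex n"
proof -
  have shift: "collapse_vertex a k t i = t i + (if i = k then t a else 0) - (if i = a then t a else 0)" for i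
    using assms(1) by (simp add: collapse_vertex_def)
  have "(\<Sum>i\<le>n. collapse_vertex a k t i) = (\<Sum>i\<le>n. t i)"
    using assms(2,3) by (simp add: shift sum.distrib sum_subtractf)
  with assms show ?thesis
    by (auto simp: standard_simplex_iff collapse_vertex_def add_nonneg_nonneg)
qed

lemma collapse_vertex_in_horn_set:
  assumes "a \<noteq> k" "a \<le> n" "k \<le> n" "t \<in> standard_simplex n"
  shows "collapse_vertex a k t \<in> horn_set n k"
  using collapse_vertex_in_standard_simplex[OF assms] assms(1,2)
  by (auto simp: horn_set_def collapse_vertex_def)

lemma lerp_collapse_vertex:
  "a \<noteq> k \<Longrightarrow> lerp s (collapse_vertex a k t) t i =
     (if i = a then s * t a else if i = k then t k + (1 - s) * t a else t i)"
  by (simp add: lerp_def collapse_vertex_def algebra_simps)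

lemma lerp_collapse_vertex_in_horn_set:
  assumes "a \<noteq> k" "a \<le> n" "k \<le> n" "t \<in> horn_set n k" "s \<in> {0..1}"
  shows "lerp s (collapse_vertex a k t) t \<in> horn_set n k"
proof -
  obtain j where j: "j \<le> n" "j \<noteq> k" "t j = 0" and t: "t \<in> standard_simplex n"
    using assms(4) by (auto simp: horn_set_def)
  have "lerp s (collapse_vertex a k t) t \<in> standard_simplex n"
    using assms t by (intro lerp_in_standard_simplex collapse_vertex_in_standard_simplex)
  moreover have "lerp s (collapse_vertex a k t) t j = 0"
    using j assms(1) by (auto simp: lerp_collapse_vertex)
  ultimately show ?thesis
    using j by (auto simp: horn_set_def)
qed

lemma strat_lerp_collapse_vertex:
  assumes "a \<noteq> k" "a \<le> n" "k \<le> n" "p a = p k" "t \<in> standard_simplex n" "s \<in> {0..1}"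
  shows "strat n p (lerp s (collapse_vertex a k t) t) = strat n p t"
proof (rule strat_cong_values)
  let ?u = "lerp s (collapse_vertex a k t) t"
  have u: "?u i = (if i = a then s * t a else if i = k then t k + (1 - s) * t a else t i)" for i
    using assms(1) by (rule lerp_collapse_vertex)
  have t0: "0 \<le> t i" for i
    using assms(5) by (simp add: standard_simplex_iff)
  fix q
  show "(\<exists>i\<le>n. 0 < ?u i \<and> q = p i) \<longleftrightarrow> (\<exists>i\<le>n. 0 < t i \<and> q = p i)"
  proof
    assume "\<exists>i\<le>n. 0 < ?u i \<and> q = p i"
    then obtain i where i: "i \<le> n" "0 < ?u i" "q = p i" by blast
    have "0 < t i \<or> (i = k \<and> 0 < t a)"
      using i(2) t0[of i] t0[of a] assms(6) by (auto simp: u zero_less_mult_iff split: if_splits)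
    then show "\<exists>i\<le>n. 0 < t i \<and> q = p i"
      using i assms(2,4) by auto
  next
    assume "\<exists>i\<le>n. 0 < t i \<and> q = p i"
    then obtain i where i: "i \<le> n" "0 < t i" "q = p i" by blast
    have "0 < ?u i \<or> (i = a \<and> 0 < ?u k)"
    proof (cases "i = a")
      case True
      have "?u a = s * t a" "?u k = t k + (1 - s) * t a"
        using u[of a] u[of k] assms(1) by simp_all
      then show ?thesis
        using True i(2) t0[of k] assms(6) by (cases "s = 0") (auto intro: add_nonneg_pos)
    next
      case False
      then show ?thesis
        using i(2) t0[of a] assms(6) by (auto simp: u add_pos_nonneg)
    qed
    then show "\<exists>i\<le>n. 0 < ?u i \<and> q = p i"
      using i assms(3,4) by auto
  qed
qed

lemma obtain_admissible_neighbour: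
  assumes "k \<le> n" "admissible_horn n p k"
  obtains a where "a \<noteq> k" "a \<le> n" "p a = p k"
proof (cases "0 < k \<and> p k = p (k - 1)")
  case True
  with assms(1) show ?thesis
    by (intro that[of "k - 1"]) auto
next
  case False
  with assms(2) show ?thesis
    by (intro that[of "k + 1"]) (auto simp: admissible_horn_def)
qed

lemma sp_homotopy_equivalence_if_admissible:
  assumes "k \<le> n" "admissible_horn n p k"
  shows "sp_homotopy_equivalence (horn_top n k) (simplex_top n) (strat n p) (strat n p) id"
proof -
  obtain a where a: "a \<noteq> k" "a \<le> n" "p a = p k"
    using obtain_admissible_neighbour[OF assms] .
  let ?c = "collapse_vertex a k"
  let ?sp = "\<lambda>X h. \<forall>x\<in>topspace X. strat n p (h x) = strat n p x"
  have strat_c: "strat n p (?c t) = strat n p t" if "t \<in> standard_simplex n" for t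
    using strat_lerp_collapse_vertex[OF a(1,2) assms(1) a(3) that, of 0] by simp
  have "sp_map (horn_top n k) (simplex_top n) (strat n p) (strat n p) id"
    unfolding sp_map_def horn_top_def simplex_top_def
    using horn_set_subset_standard_simplex[of n k]
    by (auto simp: continuous_map_from_subtopology continuous_map_in_subtopology)
  moreover have "sp_map (simplex_top n) (horn_top n k) (strat n p) (strat n p) ?c"
    unfolding sp_map_def horn_top_def simplex_top_def
    using collapse_vertex_in_horn_set[OF a(1,2) assms(1)] strat_c
    by (auto simp: continuous_map_in_subtopology continuous_map_collapse_vertex)
  moreover have "homotopic_with (?sp (horn_top n k)) (horn_top n k) (horn_top n k) ?c id"
    unfolding horn_top_def
    using lerp_collapse_vertex_in_horn_set[OF a(1,2) assms(1)] 
      strat_lerp_collapse_vertex[OF a(1,2) assms(1) a(3)] subsetD[OF horn_set_subset_standard_simplex]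
    by (intro homotopic_with_lerp continuous_map_collapse_vertex continuous_map_from_subtopology continuous_map_id) auto
  moreover have "homotopic_with (?sp (simplex_top n)) (simplex_top n) (simplex_top n) ?c id"
    unfolding simplex_top_def
    using collapse_vertex_in_standard_simplex[OF a(1,2) assms(1)]
      strat_lerp_collapse_vertex[OF a(1,2) assms(1) a(3)]
    by (intro homotopic_with_lerp continuous_map_collapse_vertex continuous_map_from_subtopology continuous_map_id)
      (auto intro: lerp_in_standard_simplex)
  ultimately show ?thesis
    unfolding sp_homotopy_equivalence_def sp_homotopic_def by auto
qed

section \<open>Non-admissible horns\<close>

lemma strat_values_distinct_if_not_admissible:
  assumes "dflag n p" "k \<le> n" "\<not> admissible_horn n p k" "i \<le> n" "i \<noteq> k"
  shows "p i \<noteq> p k"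
proof
  assume eq: "p i = p k"
  show False
  proof (cases "i < k")
    case True
    then have "p i \<le> p (k - 1)" "p (k - 1) \<le> p k"
      using assms(1,2) by (auto simp: dflag_def)
    with eq True assms(3) show False
      by (auto simp: admissible_horn_def)
  next
    case False
    then have "k < i" using assms(5) by simp
    then have "p k \<le> p (k + 1)" "p (k + 1) \<le> p i"
      using assms(1,4) by (auto simp: dflag_def)
    with eq \<open>k < i\<close> assms(3,4) show False
      by (auto simp: admissible_horn_def)
  qed
qed

lemma strat_eq_iff_if_not_admissible:
  assumes d: "dflag n p" and kn: "k \<le> n" and nadm: "\<not> admissible_horn n p k"
    and t: "t \<in> standard_simplex n"
  shows "strat n p t = p k \<longleftrightarrow> 0 < t k \<and> (\<forall>j. k < j \<and> j \<le> n \<longrightarrow> t j = 0)"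
proof -
  let ?S = "{i. i \<le> n \<and> 0 < t i}"
  have ne: "\<exists>i\<le>n. 0 < t i"
    using t by (rule standard_simplex_ex_pos)
  have M: "Max ?S \<in> ?S"
    using ne by (intro Max_in) auto
  have "strat n p t = p k \<longleftrightarrow> Max ?S = k"
    using strat_eq_Max[OF d ne] strat_values_distinct_if_not_admissible[OF d kn nadm] M by auto
  also have "\<dots> \<longleftrightarrow> 0 < t k \<and> (\<forall>j. k < j \<and> j \<le> n \<longrightarrow> t j = 0)"
  proof
    assume "Max ?S = k"
    then show "0 < t k \<and> (\<forall>j. k < j \<and> j \<le> n \<longrightarrow> t j = 0)"
    proof (intro conjI allI impI)
      show "0 < t k" using M \<open>Max ?S = k\<close> by simp
      fix j assume j: "k < j \<and> j \<le> n"
      have "\<not> (0 < t j)"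
      proof
        assume "0 < t j"
        then have "j \<le> Max ?S" using j by (intro Max_ge) auto
        with j \<open>Max ?S = k\<close> show False by simp
      qed
      then show "t j = 0"
        using t by (simp add: standard_simplex_iff order_less_le)
    qed
  next
    assume "0 < t k \<and> (\<forall>j. k < j \<and> j \<le> n \<longrightarrow> t j = 0)"
    then show "Max ?S = k"
      using kn by (intro Max_eqI) (auto simp: not_le[symmetric])
  qed
  finally show ?thesis .
qed

definition off_stratum :: "nat \<Rightarrow> (nat \<Rightarrow> 'p::order) \<Rightarrow> nat \<Rightarrow> (nat \<Rightarrow> real) set" where
  "off_stratum n p k = {t \<in> standard_simplex n. strat n p t \<noteq> p k}"

lemma lerp_vertex_in_off_stratum:
  assumes d: "dflag n p" and kn: "k \<le> n" and nadm: "\<not> admissible_horn n p k" and "0 < n"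
    and t: "t \<in> off_stratum n p k" and s: "s \<in> {0..1}"
  defines "z \<equiv> if k < n then n else 0"
  shows "lerp s t (simplex_vertex z) \<in> off_stratum n p k"
proof -
  let ?u = "lerp s t (simplex_vertex z)"
  have ts: "t \<in> standard_simplex n"
    using t by (simp add: off_stratum_def)
  have us: "?u \<in> standard_simplex n"
    using ts s by (simp add: lerp_in_standard_simplex simplex_vertex_in_standard_simplex z_def)
  have t_off: "\<not> (0 < t k \<and> (\<forall>j. k < j \<and> j \<le> n \<longrightarrow> t j = 0))"
    using t strat_eq_iff_if_not_admissible[OF d kn nadm ts] by (simp add: off_stratum_def)
  have "\<not> (0 < ?u k \<and> (\<forall>j. k < j \<and> j \<le> n \<longrightarrow> ?u j = 0))"
    \<comment> \<open>if k < n the coordinate n becomes positive, if k = n it stays 0\<close>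
  proof (cases "k < n")
    case True
    have "0 < ?u n" if "s \<noteq> 0"
      using that s ts True by (auto simp: lerp_def simplex_vertex_def z_def standard_simplex_iff intro: add_nonneg_pos)
    with True t_off show ?thesis
      by (cases "s = 0") auto
  next
    case False
    then have "k = n" "z \<noteq> n" using kn \<open>0 < n\<close> by (auto simp: z_def)
    with t_off s show ?thesis
      by (auto simp: lerp_def simplex_vertex_def zero_less_mult_iff)
  qed
  with us strat_eq_iff_if_not_admissible[OF d kn nadm us] show ?thesis
    by (simp add: off_stratum_def)
qed

lemma contractible_space_off_stratum:
  assumes "dflag n p" "k \<le> n" "\<not> admissible_horn n p k" "0 < n"
  shows "contractible_space (subtopology (powertop_real UNIV) (off_stratum n p k))"
  unfolding contractible_space_def
  using lerp_vertex_in_off_stratum[OF assms]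
  by (intro exI homotopic_with_lerp continuous_map_from_subtopology continuous_map_id continuous_map_const[THEN iffD2])
    auto

lemma continuous_map_off_stratum:
  assumes gc: "continuous_map (simplex_top n) (horn_top n k) g"
    and gs: "\<And>t. t \<in> standard_simplex n \<Longrightarrow> strat n p (g t) = strat n p t"
  shows "continuous_map (subtopology (powertop_real UNIV) (off_stratum n p k))
           (subtopology (horn_top n k) (off_stratum n p k)) g"
proof -
  have "g t \<in> horn_set n k" if "t \<in> standard_simplex n" for t
    using continuous_map_image_subset_topspace[OF gc] that by auto
  with gs horn_set_subset_standard_simplex[of n k] continuous_map_from_subtopology[OF gc, of "off_stratum n p k"]
  show ?thesis
    by (auto simp: simplex_top_def subtopology_subtopology off_stratum_def continuous_map_in_subtopology Int_absorb1)
qed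

section \<open>A sphere retract of the horn\<close>

definition skip_index :: "nat \<Rightarrow> nat \<Rightarrow> nat" where
  "skip_index k i = (if i < k then i else Suc i)"

definition unskip_index :: "nat \<Rightarrow> nat \<Rightarrow> nat" where
  "unskip_index k j = (if j < k then j else j - 1)"

lemma unskip_skip_index [simp]: "unskip_index k (skip_index k i) = i"
  by (simp add: skip_index_def unskip_index_def)

lemma skip_unskip_index: "j \<noteq> k \<Longrightarrow> skip_index k (unskip_index k j) = j"
  by (auto simp: skip_index_def unskip_index_def)

lemma skip_index_neq [simp]: "skip_index k i \<noteq> k"
  by (simp add: skip_index_def)

lemma skip_index_le: "k \<le> Suc n \<Longrightarrow> i \<le> n \<Longrightarrow> skip_index k i \<le> Suc n"
  by (simp add: skip_index_def)

lemma unskip_index_le: "k \<le> Suc n \<Longrightarrow> j \<le> Suc n \<Longrightarrow> j \<noteq> k \<Longrightarrow> unskip_index k j \<le> n"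
  by (auto simp: unskip_index_def)

lemma sum_atMost_Suc_skip_index:
  assumes "k \<le> Suc n"
  shows "(\<Sum>j\<le>Suc n. f j) = f k + (\<Sum>i\<le>n. f (skip_index k i))"
proof -
  have "bij_betw (skip_index k) {..n} ({..Suc n} - {k})"
    using assms
    by (intro bij_betw_byWitness[where f' = "unskip_index k"])
      (use unskip_index_le in \<open>auto simp: skip_unskip_index skip_index_le\<close>)
  then have "(\<Sum>j\<in>{..Suc n} - {k}. f j) = (\<Sum>i\<le>n. f (skip_index k i))"
    by (simp add: sum.reindex_bij_betw)
  with assms show ?thesis
    by (metis atMost_iff finite_atMost sum.remove)
qed

definition sum_zero_extension :: "nat \<Rightarrow> (nat \<Rightarrow> real) \<Rightarrow> nat \<Rightarrow> real" where
  "sum_zero_extension m x i = (if i \<le> m then x i else - (\<Sum>l\<le>m. x l))"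

definition boundary_scale :: "nat \<Rightarrow> (nat \<Rightarrow> real) \<Rightarrow> real" where
  "boundary_scale m x = Max ((\<lambda>i. - sum_zero_extension m x i) ` {..Suc m})"

lemma sum_sum_zero_extension: "(\<Sum>i\<le>Suc m. sum_zero_extension m x i) = 0"
proof -
  have "(\<Sum>i\<le>m. sum_zero_extension m x i) = (\<Sum>i\<le>m. x i)"
    by (simp add: sum_zero_extension_def)
  then show ?thesis
    by (simp add: sum_zero_extension_def)
qed

lemma boundary_scale_ge: "i \<le> Suc m \<Longrightarrow> - sum_zero_extension m x i \<le> boundary_scale m x"
  unfolding boundary_scale_def by (rule Max_ge) auto

lemma boundary_scale_attained: "\<exists>i\<le>Suc m. - sum_zero_extension m x i = boundary_scale m x"
proof -
  have "boundary_scale m x \<in> (\<lambda>i. - sum_zero_extension m x i) ` {..Suc m}"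
    unfolding boundary_scale_def by (rule Max_in) auto
  then show ?thesis by force
qed

lemma boundary_scale_pos:
  assumes "x \<in> topspace (nsphere m)"
  shows "0 < boundary_scale m x"
proof (rule ccontr)
  assume "\<not> 0 < boundary_scale m x"
  then have "\<forall>i\<in>{..Suc m}. 0 \<le> sum_zero_extension m x i"
    using boundary_scale_ge[of _ m x] by force
  then have "\<forall>i\<in>{..Suc m}. sum_zero_extension m x i = 0"
    using sum_sum_zero_extension[of m x] sum_nonneg_eq_0_iff[of "{..Suc m}" "sum_zero_extension m x"]
    by simp
  then have "\<forall>i\<le>m. x i = 0"
    by (metis atMost_iff le_SucI sum_zero_extension_def)
  with assms show False
    by (simp add: nsphere)
qed

text \<open>The point x of the sphere is extended to a vector of sum zero in the hyperplane of the
  face opposite k and scaled about the barycentre of that face until it reaches the boundary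
  of the face, which lies in the horn.\<close>

definition sphere_to_horn :: "nat \<Rightarrow> nat \<Rightarrow> (nat \<Rightarrow> real) \<Rightarrow> nat \<Rightarrow> real" where
  "sphere_to_horn m k x = (\<lambda>j. if j \<le> Suc (Suc m) \<and> j \<noteq> k
     then (1 + sum_zero_extension m x (unskip_index k j) / boundary_scale m x) / (real m + 2) else 0)"

lemma sphere_to_horn_skip_index:
  "k \<le> Suc (Suc m) \<Longrightarrow> i \<le> Suc m \<Longrightarrow>
   sphere_to_horn m k x (skip_index k i) = (1 + sum_zero_extension m x i / boundary_scale m x) / (real m + 2)"
  by (simp add: sphere_to_horn_def skip_index_le)

lemma sphere_to_horn_vertex [simp]: "sphere_to_horn m k x k = 0"
  by (simp add: sphere_to_horn_def)

lemma sphere_to_horn_in_horn_set: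
  assumes k: "k \<le> Suc (Suc m)" and x: "x \<in> topspace (nsphere m)"
  shows "sphere_to_horn m k x \<in> horn_set (Suc (Suc m)) k"
proof -
  let ?w = "sum_zero_extension m x" and ?M = "boundary_scale m x" and ?A = "sphere_to_horn m k x"
  have M: "0 < ?M"
    using x by (rule boundary_scale_pos)
  have nonneg: "0 \<le> ?A j" for j
  proof (cases "j \<le> Suc (Suc m) \<and> j \<noteq> k")
    case True
    then have "- ?w (unskip_index k j) \<le> ?M"
      using k by (intro boundary_scale_ge unskip_index_le) auto
    with M True show ?thesis
      by (simp add: sphere_to_horn_def field_simps)
  qed (auto simp: sphere_to_horn_def)
  have "(\<Sum>j\<le>Suc (Suc m). ?A j) = (\<Sum>i\<le>Suc m. (1 + ?w i / ?M) / (real m + 2))"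
    using k by (simp del: sum.atMost_Suc add: sum_atMost_Suc_skip_index sphere_to_horn_skip_index)
  also have "\<dots> = (real m + 2 + (\<Sum>i\<le>Suc m. ?w i) / ?M) / (real m + 2)"
    by (simp add: sum_divide_distrib[symmetric] sum.distrib)
  also have "\<dots> = 1"
    by (simp del: sum.atMost_Suc add: sum_sum_zero_extension)
  finally have "?A \<in> standard_simplex (Suc (Suc m))"
    using nonneg by (simp add: standard_simplex_iff sphere_to_horn_def)
  moreover obtain i where "i \<le> Suc m" "?w i = - ?M"
    using boundary_scale_attained by (metis minus_minus)
  then have "?A (skip_index k i) = 0" "skip_index k i \<le> Suc (Suc m)"
    using k M by (simp_all add: sphere_to_horn_skip_index skip_index_le)
  ultimately show ?thesis
    unfolding horn_set_def by (auto intro!: exI[of _ "skip_index k i"])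
qed

lemma continuous_map_sphere_to_horn:
  "continuous_map (nsphere m) (powertop_real UNIV) (sphere_to_horn m k)"
  unfolding continuous_map_componentwise_UNIV
proof
  fix j
  have w: "continuous_map (nsphere m) euclideanreal (\<lambda>x. sum_zero_extension m x i)" for i
    unfolding sum_zero_extension_def
    by (cases "i \<le> m") (auto intro!: continuous_intros continuous_map_nsphere_projection)
  have "continuous_map (nsphere m) euclideanreal (boundary_scale m)"
    unfolding boundary_scale_def
    by (intro continuous_map_Max_real) (auto intro: w continuous_map_minus)
  with w show "continuous_map (nsphere m) euclideanreal (\<lambda>x. sphere_to_horn m k x j)"
    unfolding sphere_to_horn_def
    by (cases "j \<le> Suc (Suc m) \<and> j \<noteq> k")
      (auto intro!: continuous_intros dest: boundary_scale_pos)
qed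

text \<open>Conversely, a point t of the horn is projected from the vertex k onto the opposite face,
  centred at its barycentre (up to the factor 1 - t k) and normalised; the last of the
  m + 2 coordinates is dropped, which is harmless since they sum to zero.\<close>

definition face_centered :: "nat \<Rightarrow> nat \<Rightarrow> (nat \<Rightarrow> real) \<Rightarrow> nat \<Rightarrow> real" where
  "face_centered m k t i = t (skip_index k i) - (1 - t k) / (real m + 2)"

definition face_centered_norm :: "nat \<Rightarrow> nat \<Rightarrow> (nat \<Rightarrow> real) \<Rightarrow> real" where
  "face_centered_norm m k t = sqrt (\<Sum>i\<le>m. (face_centered m k t i)\<^sup>2)"

definition horn_to_sphere :: "nat \<Rightarrow> nat \<Rightarrow> (nat \<Rightarrow> real) \<Rightarrow> nat \<Rightarrow> real" where
  "horn_to_sphere m k t = (\<lambda>i. if i \<le> m then face_centered m k t i / face_centered_norm m k t else 0)"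

lemma face_centered_norm_pos:
  assumes k: "k \<le> Suc (Suc m)" and t: "t \<in> horn_set (Suc (Suc m)) k" and tk: "t k \<noteq> 1"
  shows "0 < face_centered_norm m k t"
proof -
  let ?c = "face_centered m k t"
  obtain j where j: "j \<le> Suc (Suc m)" "j \<noteq> k" "t j = 0" and ts: "t \<in> standard_simplex (Suc (Suc m))"
    using t by (auto simp: horn_set_def)
  have "t k \<le> 1" using ts by (simp add: standard_simplex_def)
  with tk have tk1: "t k < 1" by simp
  have "1 = t k + (\<Sum>i\<le>Suc m. t (skip_index k i))"
    using ts sum_atMost_Suc_skip_index[OF k, of t] by (simp add: standard_simplex_def)
  moreover have "(\<Sum>i\<le>Suc m. (1 - t k) / (real m + 2)) = 1 - t k"
    by (simp add: field_simps del: sum.atMost_Suc)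
  ultimately have sum_c: "(\<Sum>i\<le>Suc m. ?c i) = 0"
    by (simp add: face_centered_def sum_subtractf del: sum.atMost_Suc)
  have c_neg: "?c (unskip_index k j) < 0"
    using j tk1 by (simp add: face_centered_def skip_unskip_index)
  show ?thesis
  proof (rule ccontr)
    assume "\<not> 0 < face_centered_norm m k t"
    then have "(\<Sum>i\<le>m. (?c i)\<^sup>2) = 0"
      by (simp add: face_centered_norm_def order_less_le sum_nonneg)
    then have "\<forall>i\<le>m. ?c i = 0"
      using sum_nonneg_eq_0_iff[of "{..m}" "\<lambda>i. (?c i)\<^sup>2"] by simp
    moreover from this have "?c (Suc m) = 0"
      using sum_c by simp
    ultimately have "\<forall>i\<le>Suc m. ?c i = 0"
      using le_Suc_eq by auto
    with c_neg unskip_index_le[OF k j(1,2)] show False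
      by force
  qed
qed

lemma horn_to_sphere_in_nsphere:
  assumes "0 < face_centered_norm m k t"
  shows "horn_to_sphere m k t \<in> topspace (nsphere m)"
proof -
  have "(\<Sum>i\<le>m. (horn_to_sphere m k t i)\<^sup>2) =
        (\<Sum>i\<le>m. (face_centered m k t i)\<^sup>2) / (face_centered_norm m k t)\<^sup>2"
    by (simp add: horn_to_sphere_def power_divide sum_divide_distrib)
  also have "\<dots> = 1"
    using assms by (simp add: face_centered_norm_def sum_nonneg)
  finally show ?thesis
    by (simp add: nsphere horn_to_sphere_def)
qed

lemma horn_to_sphere_sphere_to_horn:
  assumes k: "k \<le> Suc (Suc m)" and x: "x \<in> topspace (nsphere m)"
  shows "horn_to_sphere m k (sphere_to_horn m k x) = x"
proof
  let ?M = "boundary_scale m x" and ?A = "sphere_to_horn m k x"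
  have M: "0 < ?M"
    using x by (rule boundary_scale_pos)
  have sphere: "(\<Sum>i\<le>m. (x i)\<^sup>2) = 1" "\<And>i. m < i \<Longrightarrow> x i = 0"
    using x by (auto simp: nsphere)
  have c: "face_centered m k ?A i = x i / ((real m + 2) * ?M)" if "i \<le> m" for i
  proof -
    have "?A (skip_index k i) = (1 + x i / ?M) / (real m + 2)"
      using that k by (simp add: sphere_to_horn_skip_index sum_zero_extension_def)
    then show ?thesis
      by (simp add: face_centered_def add_divide_distrib)
  qed
  have "(\<Sum>i\<le>m. (face_centered m k ?A i)\<^sup>2) = (1 / ((real m + 2) * ?M))\<^sup>2"
    using sphere(1) by (simp add: c power_divide sum_divide_distrib[symmetric])
  then have "face_centered_norm m k ?A = 1 / ((real m + 2) * ?M)"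
    using M by (simp add: face_centered_norm_def)
  with M c sphere(2) show "horn_to_sphere m k ?A i = x i" for i
    by (cases "i \<le> m") (auto simp: horn_to_sphere_def)
qed

lemma continuous_map_horn_to_sphere:
  assumes "\<And>t. t \<in> S \<Longrightarrow> 0 < face_centered_norm m k t"
  shows "continuous_map (subtopology (powertop_real UNIV) S) (nsphere m) (horn_to_sphere m k)"
proof -
  let ?X = "subtopology (powertop_real UNIV) S"
  have coord: "continuous_map ?X euclideanreal (\<lambda>t. t j)" for j
    by (rule continuous_map_from_subtopology)
      (use continuous_map_product_projection[of j UNIV "\<lambda>_. euclideanreal"] in simp)
  have c: "continuous_map ?X euclideanreal (\<lambda>t. face_centered m k t i)" for i
    unfolding face_centered_def by (intro continuous_intros coord) auto
  have "continuous_map ?X euclideanreal (face_centered_norm m k)"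
    unfolding face_centered_norm_def by (intro continuous_intros c) auto
  moreover have "face_centered_norm m k t \<noteq> 0" if "t \<in> topspace ?X" for t
    using assms that by fastforce
  ultimately have "continuous_map ?X euclideanreal (\<lambda>t. horn_to_sphere m k t i)" for i
    unfolding horn_to_sphere_def using c by (cases "i \<le> m") (auto intro!: continuous_intros)
  moreover have "horn_to_sphere m k t \<in> topspace (nsphere m)" if "t \<in> S" for t
    using assms[OF that] by (rule horn_to_sphere_in_nsphere)
  ultimately show ?thesis
    unfolding nsphere by (auto simp: continuous_map_in_subtopology continuous_map_componentwise_UNIV nsphere)
qed

lemma sphere_to_horn_in_off_stratum:
  assumes "dflag (Suc (Suc m)) p" "k \<le> Suc (Suc m)" "\<not> admissible_horn (Suc (Suc m)) p k"
    and "x \<in> topspace (nsphere m)"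
  shows "sphere_to_horn m k x \<in> off_stratum (Suc (Suc m)) p k"
proof -
  have "sphere_to_horn m k x \<in> standard_simplex (Suc (Suc m))"
    using sphere_to_horn_in_horn_set[OF assms(2,4)] by (simp add: horn_set_def)
  then show ?thesis
    using strat_eq_iff_if_not_admissible[OF assms(1-3)] by (simp add: off_stratum_def)
qed

lemma subtopology_horn_top:
  "subtopology (horn_top n k) S = subtopology (powertop_real UNIV) (horn_set n k \<inter> S)"
  by (simp add: horn_top_def subtopology_subtopology)

lemma continuous_map_sphere_to_horn_off_stratum:
  assumes "dflag (Suc (Suc m)) p" "k \<le> Suc (Suc m)" "\<not> admissible_horn (Suc (Suc m)) p k"
  shows "continuous_map (nsphere m) (subtopology (horn_top (Suc (Suc m)) k) (off_stratum (Suc (Suc m)) p k))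
           (sphere_to_horn m k)"
  unfolding subtopology_horn_top
  using sphere_to_horn_in_horn_set[OF assms(2)] sphere_to_horn_in_off_stratum[OF assms]
  by (auto simp: continuous_map_in_subtopology continuous_map_sphere_to_horn)

lemma continuous_map_horn_to_sphere_off_stratum:
  assumes "dflag (Suc (Suc m)) p" "k \<le> Suc (Suc m)" "\<not> admissible_horn (Suc (Suc m)) p k"
  shows "continuous_map (subtopology (horn_top (Suc (Suc m)) k) (off_stratum (Suc (Suc m)) p k)) (nsphere m)
           (horn_to_sphere m k)"
  unfolding subtopology_horn_top
proof (rule continuous_map_horn_to_sphere)
  fix t assume t: "t \<in> horn_set (Suc (Suc m)) k \<inter> off_stratum (Suc (Suc m)) p k"
  then show "0 < face_centered_norm m k t"
  proof (intro face_centered_norm_pos)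
    have "t \<in> standard_simplex (Suc (Suc m))" "strat (Suc (Suc m)) p t \<noteq> p k"
      using t by (auto simp: off_stratum_def)
    then show "t k \<noteq> 1"
      using assms(2) strat_eq_iff_if_not_admissible[OF assms] standard_simplex_vertex_coord
      by fastforce
  qed (use assms in auto)
qed

lemma obtain_sp_homotopy_inverse:
  assumes "sp_homotopy_equivalence (horn_top n k) (simplex_top n) (strat n p) (strat n p) id"
  obtains g where "continuous_map (simplex_top n) (horn_top n k) g"
    "\<And>t. t \<in> standard_simplex n \<Longrightarrow> strat n p (g t) = strat n p t"
    "homotopic_with (\<lambda>h. \<forall>t\<in>horn_set n k. strat n p (h t) = strat n p t)
       (horn_top n k) (horn_top n k) g id"
proof -
  from assms obtain g where "sp_map (simplex_top n) (horn_top n k) (strat n p) (strat n p) g"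
    and "sp_homotopic (horn_top n k) (horn_top n k) (strat n p) (strat n p) (g \<circ> id) id"
    unfolding sp_homotopy_equivalence_def by blast
  then show thesis
    unfolding sp_map_def sp_homotopic_def by (intro that) auto
qed

lemma contractible_space_nsphere_if_not_admissible:
  fixes p :: "nat \<Rightarrow> 'p::order" and m :: nat
  defines "n \<equiv> Suc (Suc m)"
  assumes d: "dflag n p" and k: "k \<le> n" and nadm: "\<not> admissible_horn n p k"
    and he: "sp_homotopy_equivalence (horn_top n k) (simplex_top n) (strat n p) (strat n p) id"
  shows "contractible_space (nsphere m)"
proof -
  obtain g where gc: "continuous_map (simplex_top n) (horn_top n k) g"
    and gs: "\<And>t. t \<in> standard_simplex n \<Longrightarrow> strat n p (g t) = strat n p t"
    and hg: "homotopic_with (\<lambda>h. \<forall>t\<in>horn_set n k. strat n p (h t) = strat n p t)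
               (horn_top n k) (horn_top n k) g id"
    using obtain_sp_homotopy_inverse[OF he] by blast
  have hyps: "dflag (Suc (Suc m)) p" "k \<le> Suc (Suc m)" "\<not> admissible_horn (Suc (Suc m)) p k"
    using d k nadm by (simp_all add: n_def)
  let ?A = "sphere_to_horn m k" and ?Off = "off_stratum n p k"
  let ?Y = "subtopology (horn_top n k) ?Off"
  have cA: "continuous_map (nsphere m) ?Y ?A"
    using continuous_map_sphere_to_horn_off_stratum[OF hyps] by (simp add: n_def)
  have cB: "continuous_map ?Y (nsphere m) (horn_to_sphere m k)"
    using continuous_map_horn_to_sphere_off_stratum[OF hyps] by (simp add: n_def)
  have A_horn: "?A x \<in> horn_set n k" and A_off: "?A x \<in> ?Off" if "x \<in> topspace (nsphere m)" for x
    using sphere_to_horn_in_horn_set[OF hyps(2) that] sphere_to_horn_in_off_stratum[OF hyps that]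
    by (simp_all add: n_def)
  have "continuous_map (nsphere m) (subtopology (powertop_real UNIV) ?Off) ?A"
    using A_off by (auto simp: continuous_map_in_subtopology continuous_map_sphere_to_horn)
  moreover have "continuous_map (subtopology (powertop_real UNIV) ?Off) ?Y g"
    using gc gs by (rule continuous_map_off_stratum)
  moreover have "contractible_space (subtopology (powertop_real UNIV) ?Off)"
    using d k nadm by (rule contractible_space_off_stratum) (simp add: n_def)
  ultimately obtain c where null: "homotopic_with (\<lambda>_. True) (nsphere m) ?Y (g \<circ> ?A) (\<lambda>_. c)"
    by (rule nullhomotopic_through_contractible_space)
  have "homotopic_with (\<lambda>h. \<forall>x\<in>topspace (nsphere m). strat n p (h x) = strat n p (?A x))
          (nsphere m) (horn_top n k) (g \<circ> ?A) (id \<circ> ?A)"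
    using continuous_map_into_fulltopology[OF cA] A_horn
    by (intro homotopic_with_compose_continuous_map_right[OF hg]) auto
  then have "homotopic_with (\<lambda>_. True) (nsphere m) ?Y (g \<circ> ?A) (id \<circ> ?A)"
    by (rule homotopic_with_into_subtopology)
      (use A_off in \<open>auto simp: off_stratum_def horn_set_def\<close>)
  then have "homotopic_with (\<lambda>_. True) (nsphere m) ?Y ?A (\<lambda>_. c)"
    using null by (metis homotopic_with_symD homotopic_with_trans id_comp)
  with cA cB horn_to_sphere_sphere_to_horn[OF hyps(2)] show ?thesis
    by (rule contractible_space_if_nullhomotopic_section)
qed

lemma admissible_if_sp_homotopy_equivalence:
  fixes p :: "nat \<Rightarrow> 'p::order"
  assumes d: "dflag n p" and k: "k \<le> n"
    and he: "sp_homotopy_equivalence (horn_top n k) (simplex_top n) (strat n p) (strat n p) id"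
  shows "admissible_horn n p k"
proof (rule ccontr)
  assume nadm: "\<not> admissible_horn n p k"
  obtain g where gc: "continuous_map (simplex_top n) (horn_top n k) g"
    and gs: "\<And>t. t \<in> standard_simplex n \<Longrightarrow> strat n p (g t) = strat n p t"
    using obtain_sp_homotopy_inverse[OF he] by blast
  have g_horn: "g (simplex_vertex z) \<in> horn_set n k" if "z \<le> n" for z
    using continuous_map_image_subset_topspace[OF gc] simplex_vertex_in_standard_simplex[OF that] by auto
  consider "n = 0" | "n = 1" | m where "n = Suc (Suc m)"
    by (metis One_nat_def not0_implies_Suc)
  then show False
  proof cases
    case 1
    with g_horn[of 0] k show False
      by (auto simp: horn_set_def)
  next
    case 2
    define z where "z = 1 - k"
    have z: "z \<le> n" "z \<noteq> k"
      using 2 k unfolding z_def by arith+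
    let ?t = "g (simplex_vertex z)"
    have "?t \<in> standard_simplex n" "?t k = 1"
      using g_horn[OF z(1)] horn_set_one_vertex[of k ?t] 2 k by (auto simp: horn_set_def)
    then have "strat n p ?t = p k"
      using strat_eq_iff_if_not_admissible[OF d k nadm] standard_simplex_vertex_coord k by fastforce
    moreover have "strat n p ?t = p z"
      using gs[OF simplex_vertex_in_standard_simplex[OF z(1)]] strat_simplex_vertex[OF z(1)] by simp
    ultimately show False
      using strat_values_distinct_if_not_admissible[OF d k nadm z] by simp
  next
    case 3
    then show False
      using contractible_space_nsphere_if_not_admissible[of m p k] d k nadm he non_contractible_space_nsphere
      by blast
  qed
qed

theorem lemma1p2p10:
  fixes p :: "nat \<Rightarrow> 'p::order" and n k :: nat
  assumes "dflag n p" and "k \<le> n"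
  shows "admissible_horn n p k \<longleftrightarrow>
    sp_homotopy_equivalence (horn_top n k) (simplex_top n) (strat n p) (strat n p) id"
  using sp_homotopy_equivalence_if_admissible[OF assms(2)]
    admissible_if_sp_homotopy_equivalence[OF assms] by blast

end
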